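(* Let $Q$ be a quiver and let $C\subseteq\Bbbk Q$ be a monomial subcoalgebra. Every finitely generated right coideal of $C$ is contained in a right coideal of $C$ admitting a finite linear basis whose elements are all paths in $C$.
   Context: $\Bbbk$ is a field. The path coalgebra $\Bbbk Q$ has basis all paths of $Q$ (including trivial paths, identified with vertices), with $\Delta(p)=\sum_{xy=p}x\otimes y$ ($xy$ = concatenation) and $\varepsilon(p)=1$ if $p$ is trivial, $0$ otherwise. A subcoalgebra $C\subseteq\Bbbk Q$ is monomial if it contains all vertices and arrows of $Q$ and has a linear basis consisting of paths. A right coideal of $C$ is a subspace $I$ with $\Delta(I)\subseteq I\otimes C$; it is finitely generated if it is the smallest right coideal containing some finite set. *)

theory Defs
  imports Main
begin

text \<open>A quiver Q is given by a source map src and a target map tgt from the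
arrow type 'a to the vertex type 'v (all elements of the types are vertices
resp. arrows).  A path is a pair (v, [a1,...,an]) of a start vertex and a list
of arrows with src a1 = v and tgt ai = src a(i+1); the trivial path at v is
(v, []).  Concatenation x y means x followed by y.\<close>

type_synonym ('v,'a) path = "'v \<times> 'a list"

fun valid_from :: "('a \<Rightarrow> 'v) \<Rightarrow> ('a \<Rightarrow> 'v) \<Rightarrow> 'v \<Rightarrow> 'a list \<Rightarrow> bool" where
  "valid_from src tgt v [] = True"
| "valid_from src tgt v (a # as) = (src a = v \<and> valid_from src tgt (tgt a) as)"

definition is_path :: "('a \<Rightarrow> 'v) \<Rightarrow> ('a \<Rightarrow> 'v) \<Rightarrow> ('v,'a) path \<Rightarrow> bool" where
  "is_path src tgt p = valid_from src tgt (fst p) (snd p)"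

fun path_end :: "('a \<Rightarrow> 'v) \<Rightarrow> 'v \<Rightarrow> 'a list \<Rightarrow> 'v" where
  "path_end tgt v [] = v"
| "path_end tgt v (a # as) = path_end tgt (tgt a) as"

definition trivial_path :: "'v \<Rightarrow> ('v,'a) path" where
  "trivial_path v = (v, [])"

definition arrow_path :: "('a \<Rightarrow> 'v) \<Rightarrow> 'a \<Rightarrow> ('v,'a) path" where
  "arrow_path src a = (src a, [a])"

definition concat_eq :: "('a \<Rightarrow> 'v) \<Rightarrow> ('a \<Rightarrow> 'v) \<Rightarrow> ('v,'a) path \<Rightarrow> ('v,'a) path \<Rightarrow> ('v,'a) path \<Rightarrow> bool" where
  "concat_eq src tgt x y p \<longleftrightarrow> is_path src tgt x \<and> is_path src tgt y \<and>
     path_end tgt (fst x) (snd x) = fst y \<and> p = (fst x, snd x @ snd y)"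

text \<open>Elements of kQ \<otimes> kQ: finitely supported coefficient functions on pairs
of paths (pairs of paths form a basis of kQ \<otimes> kQ).\<close>

definition supp :: "('b \<Rightarrow> 'k::zero) \<Rightarrow> 'b set" where
  "supp f = {b. f b \<noteq> 0}"

definition kQ :: "('a \<Rightarrow> 'v) \<Rightarrow> ('a \<Rightarrow> 'v) \<Rightarrow> (('v,'a) path \<Rightarrow> 'k::zero) set" where
  "kQ src tgt = {f. finite (supp f) \<and> supp f \<subseteq> {p. is_path src tgt p}}"

definition basis_vec :: "'b \<Rightarrow> 'b \<Rightarrow> 'k::{zero,one}" where
  "basis_vec p = (\<lambda>q. if q = p then 1 else 0)"

definition tensor :: "('b \<Rightarrow> 'k::times) \<Rightarrow> ('b \<Rightarrow> 'k) \<Rightarrow> ('b \<times> 'b \<Rightarrow> 'k)" where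
  "tensor u w = (\<lambda>(x, y). u x * w y)"

definition lin_span :: "('b \<Rightarrow> 'k::field) set \<Rightarrow> ('b \<Rightarrow> 'k) set" where
  "lin_span S = {f. \<exists>F c. finite F \<and> F \<subseteq> S \<and> f = (\<lambda>b. \<Sum>u\<in>F. c u * u b)}"

definition subspace_of :: "('b \<Rightarrow> 'k::field) set \<Rightarrow> bool" where
  "subspace_of V \<longleftrightarrow> (\<lambda>b. 0) \<in> V \<and> (\<forall>u\<in>V. \<forall>w\<in>V. (\<lambda>b. u b + w b) \<in> V) \<and> (\<forall>c. \<forall>u\<in>V. (\<lambda>b. c * u b) \<in> V)"

definition tensor_space :: "('b \<Rightarrow> 'k::field) set \<Rightarrow> ('b \<Rightarrow> 'k) set \<Rightarrow> ('b \<times> 'b \<Rightarrow> 'k) set" where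
  "tensor_space U W = lin_span {tensor u w | u w. u \<in> U \<and> w \<in> W}"

definition comult_path :: "('a \<Rightarrow> 'v) \<Rightarrow> ('a \<Rightarrow> 'v) \<Rightarrow> ('v,'a) path \<Rightarrow> (('v,'a) path \<times> ('v,'a) path \<Rightarrow> 'k::field)" where
  "comult_path src tgt p = (\<lambda>(x, y). if concat_eq src tgt x y p then 1 else 0)"

definition comult :: "('a \<Rightarrow> 'v) \<Rightarrow> ('a \<Rightarrow> 'v) \<Rightarrow> (('v,'a) path \<Rightarrow> 'k::field) \<Rightarrow> (('v,'a) path \<times> ('v,'a) path \<Rightarrow> 'k)" where
  "comult src tgt f = (\<lambda>xy. \<Sum>p\<in>supp f. f p * comult_path src tgt p xy)"

definition subcoalgebra :: "('a \<Rightarrow> 'v) \<Rightarrow> ('a \<Rightarrow> 'v) \<Rightarrow> (('v,'a) path \<Rightarrow> 'k::field) set \<Rightarrow> bool" where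
  "subcoalgebra src tgt C \<longleftrightarrow> subspace_of C \<and> C \<subseteq> kQ src tgt \<and>
     (\<forall>f\<in>C. comult src tgt f \<in> tensor_space C C)"

text \<open>Monomial: contains all vertices and arrows and has a linear basis of paths
(distinct paths are linearly independent in kQ, so a basis of paths is just a set of
paths spanning C).\<close>
definition monomial_subcoalgebra :: "('a \<Rightarrow> 'v) \<Rightarrow> ('a \<Rightarrow> 'v) \<Rightarrow> (('v,'a) path \<Rightarrow> 'k::field) set \<Rightarrow> bool" where
  "monomial_subcoalgebra src tgt C \<longleftrightarrow> subcoalgebra src tgt C \<and>
     (\<forall>v. basis_vec (trivial_path v) \<in> C) \<and> (\<forall>a. basis_vec (arrow_path src a) \<in> C) \<and>
     (\<exists>P. P \<subseteq> {p. is_path src tgt p} \<and> C = lin_span (basis_vec ` P))"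

definition right_coideal :: "('a \<Rightarrow> 'v) \<Rightarrow> ('a \<Rightarrow> 'v) \<Rightarrow> (('v,'a) path \<Rightarrow> 'k::field) set \<Rightarrow> (('v,'a) path \<Rightarrow> 'k) set \<Rightarrow> bool" where
  "right_coideal src tgt C I \<longleftrightarrow> subspace_of I \<and> I \<subseteq> C \<and>
     (\<forall>f\<in>I. comult src tgt f \<in> tensor_space I C)"

definition fg_right_coideal :: "('a \<Rightarrow> 'v) \<Rightarrow> ('a \<Rightarrow> 'v) \<Rightarrow> (('v,'a) path \<Rightarrow> 'k::field) set \<Rightarrow> (('v,'a) path \<Rightarrow> 'k) set \<Rightarrow> bool" where
  "fg_right_coideal src tgt C I \<longleftrightarrow> right_coideal src tgt C I \<and>
     (\<exists>S. finite S \<and> I = \<Inter>{J. right_coideal src tgt C J \<and> S \<subseteq> J})"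

end

theory Submission
  imports Defs
begin

text \<open>Let \<open>C\<close> be spanned by the set of paths \<open>P\<^sub>0\<close>. Since \<open>\<Delta>(p)\<close> is a sum of
\<open>x \<otimes> y\<close> over the factorizations \<open>p = xy\<close>, and these tensors are linearly
independent, \<open>\<Delta>(C) \<subseteq> C \<otimes> C\<close> forces \<open>P\<^sub>0\<close> to be closed under taking factors.
A finitely generated right coideal is the smallest one containing finitely many
elements, whose supports make up a finite set \<open>T\<close> of paths. The left factors of
paths in \<open>T\<close> form a finite set \<open>P \<subseteq> P\<^sub>0\<close>, closed under left factors, and every
right factor of a path in \<open>P\<close> lies in \<open>P\<^sub>0\<close>; hence the span of \<open>P\<close> is a right
coideal containing the generators, and so contains the coideal.\<close>

lemma inj_basis_vec: "inj (basis_vec :: 'b \<Rightarrow> 'b \<Rightarrow> 'k::zero_neq_one)"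
proof (rule injI)
  fix p q :: 'b
  assume "(basis_vec p :: 'b \<Rightarrow> 'k) = basis_vec q"
  then have "(basis_vec p :: 'b \<Rightarrow> 'k) p = basis_vec q p" by simp
  then show "p = q" by (auto simp: basis_vec_def split: if_splits)
qed

lemma supp_basis_vec [simp]: "supp (basis_vec p :: 'b \<Rightarrow> 'k::zero_neq_one) = {p}"
  by (auto simp: supp_def basis_vec_def)

lemma lin_span_mono: "S \<subseteq> T \<Longrightarrow> lin_span S \<subseteq> lin_span T"
  unfolding lin_span_def by blast

lemma supp_lin_comb_subset:
  "supp (\<lambda>b. \<Sum>u\<in>F. c u * u b :: 'k::semiring_0) \<subseteq> (\<Union>u\<in>F. supp u)"
proof
  fix b assume "b \<in> supp (\<lambda>b. \<Sum>u\<in>F. c u * u b)"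
  then have "(\<Sum>u\<in>F. c u * u b) \<noteq> 0"
    by (simp add: supp_def)
  then obtain u where "u \<in> F" "c u * u b \<noteq> 0"
    by (meson sum.neutral)
  then have "u \<in> F" "u b \<noteq> 0"
    by auto
  then show "b \<in> (\<Union>u\<in>F. supp u)"
    by (auto simp: supp_def)
qed

lemma in_lin_span_basis_vec_supp:
  fixes f :: "'b \<Rightarrow> 'k::field"
  assumes "finite (supp f)"
  shows "f \<in> lin_span (basis_vec ` supp f)"
proof -
  have repr: "f = (\<lambda>b. \<Sum>u\<in>basis_vec ` supp f. f (inv basis_vec u) * u b)"
  proof
    fix b
    have "(\<Sum>u\<in>basis_vec ` supp f. f (inv basis_vec u) * u b)
        = (\<Sum>p\<in>supp f. f p * basis_vec p b)"
      by (subst sum.reindex) (auto intro: inj_on_subset[OF inj_basis_vec]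
          simp: inv_f_f[OF inj_basis_vec])
    also have "\<dots> = (\<Sum>p\<in>supp f. if b = p then f b else 0)"
      by (rule sum.cong) (auto simp: basis_vec_def)
    also have "\<dots> = f b"
      using assms by (auto simp: supp_def)
    finally show "f b = (\<Sum>u\<in>basis_vec ` supp f. f (inv basis_vec u) * u b)" by (rule sym)
  qed
  show ?thesis
    unfolding lin_span_def
  proof (intro CollectI exI conjI)
    show "finite (basis_vec ` supp f)"
      using assms by blast
  qed (rule subset_refl, rule repr)
qed

lemma lin_span_basis_vec_iff:
  "(f :: 'b \<Rightarrow> 'k::field) \<in> lin_span (basis_vec ` B) \<longleftrightarrow> finite (supp f) \<and> supp f \<subseteq> B"
proof
  assume "f \<in> lin_span (basis_vec ` B)"
  then obtain F c where F: "finite F" "F \<subseteq> basis_vec ` B" and f: "f = (\<lambda>b. \<Sum>u\<in>F. c u * u b)"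
    unfolding lin_span_def by blast
  have "supp f \<subseteq> (\<Union>u\<in>F. supp u)"
    unfolding f by (rule supp_lin_comb_subset)
  moreover have "(\<Union>u\<in>F. supp u) \<subseteq> B" "finite (\<Union>u\<in>F. supp u)"
    using F by auto
  ultimately show "finite (supp f) \<and> supp f \<subseteq> B"
    by (auto intro: finite_subset)
next
  assume "finite (supp f) \<and> supp f \<subseteq> B"
  then have "lin_span (basis_vec ` supp f) \<subseteq> (lin_span (basis_vec ` B) :: ('b \<Rightarrow> 'k) set)"
    by (intro lin_span_mono image_mono) simp
  with \<open>finite (supp f) \<and> supp f \<subseteq> B\<close> show "f \<in> lin_span (basis_vec ` B)"
    using in_lin_span_basis_vec_supp by blast
qed

lemma basis_vec_in_lin_span_basis_vec_iff [simp]: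
  "(basis_vec p :: 'b \<Rightarrow> 'k::field) \<in> lin_span (basis_vec ` B) \<longleftrightarrow> p \<in> B"
  by (simp add: lin_span_basis_vec_iff)

lemma subspace_of_lin_span_basis_vec:
  "subspace_of (lin_span (basis_vec ` B) :: ('b \<Rightarrow> 'k::field) set)"
proof -
  let ?V = "lin_span (basis_vec ` B) :: ('b \<Rightarrow> 'k) set"
  have "(\<lambda>b. 0) \<in> ?V"
    by (simp add: lin_span_basis_vec_iff supp_def)
  moreover have "(\<lambda>b. u b + w b) \<in> ?V" if "u \<in> ?V" "w \<in> ?V" for u w
  proof -
    have "supp (\<lambda>b. u b + w b) \<subseteq> supp u \<union> supp w"
      by (auto simp: supp_def)
    then show ?thesis
      using that by (auto simp: lin_span_basis_vec_iff intro: finite_subset)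
  qed
  moreover have "(\<lambda>b. c * u b) \<in> ?V" if "u \<in> ?V" for c u
  proof -
    have "supp (\<lambda>b. c * u b) \<subseteq> supp u"
      by (auto simp: supp_def)
    then show ?thesis
      using that by (auto simp: lin_span_basis_vec_iff intro: finite_subset)
  qed
  ultimately show ?thesis
    unfolding subspace_of_def by blast
qed

lemma supp_tensor_subset: "supp (tensor u w) \<subseteq> supp u \<times> supp (w :: 'b \<Rightarrow> 'k::semiring_0)"
  by (auto simp: supp_def tensor_def)

lemma supp_tensor_space_subset:
  assumes "g \<in> tensor_space U W"
    and "\<And>u. u \<in> U \<Longrightarrow> supp u \<subseteq> A" "\<And>w. w \<in> W \<Longrightarrow> supp w \<subseteq> B"
  shows "supp (g :: 'b \<times> 'b \<Rightarrow> 'k::field) \<subseteq> A \<times> B"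
proof -
  obtain F c where F: "F \<subseteq> {tensor u w | u w. u \<in> U \<and> w \<in> W}" and g: "g = (\<lambda>b. \<Sum>t\<in>F. c t * t b)"
    using assms(1) unfolding tensor_space_def lin_span_def by blast
  have "supp (tensor u w) \<subseteq> A \<times> B" if "u \<in> U" "w \<in> W" for u w
    using assms(2)[OF that(1)] assms(3)[OF that(2)] supp_tensor_subset[of u w] by blast
  then have "(\<Union>t\<in>F. supp t) \<subseteq> A \<times> B"
    using F by blast
  moreover have "supp g \<subseteq> (\<Union>t\<in>F. supp t)"
    unfolding g by (rule supp_lin_comb_subset)
  ultimately show ?thesis
    by blast
qed

lemma in_tensor_space_lin_span_basis_vec:
  fixes g :: "'b \<times> 'b \<Rightarrow> 'k::field"
  assumes "finite (supp g)" "supp g \<subseteq> A \<times> B"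
  shows "g \<in> tensor_space (lin_span (basis_vec ` A)) (lin_span (basis_vec ` B))"
proof -
  have "basis_vec ` supp g \<subseteq>
    {tensor u w | (u :: 'b \<Rightarrow> 'k) w. u \<in> lin_span (basis_vec ` A) \<and> w \<in> lin_span (basis_vec ` B)}"
  proof
    fix t :: "'b \<times> 'b \<Rightarrow> 'k"
    assume "t \<in> basis_vec ` supp g"
    then obtain x y where xy: "(x, y) \<in> supp g" "t = basis_vec (x, y)" by auto
    then have "t = tensor (basis_vec x :: 'b \<Rightarrow> 'k) (basis_vec y)"
      by (auto simp: tensor_def basis_vec_def)
    moreover have "(basis_vec x :: 'b \<Rightarrow> 'k) \<in> lin_span (basis_vec ` A)"
      "(basis_vec y :: 'b \<Rightarrow> 'k) \<in> lin_span (basis_vec ` B)"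
      using xy assms(2) by (auto simp: lin_span_basis_vec_iff)
    ultimately show "t \<in> {tensor u w | (u :: 'b \<Rightarrow> 'k) w. u \<in> lin_span (basis_vec ` A) \<and> w \<in> lin_span (basis_vec ` B)}"
      by blast
  qed
  then have "(lin_span (basis_vec ` supp g) :: ('b \<times> 'b \<Rightarrow> 'k) set) \<subseteq>
      tensor_space (lin_span (basis_vec ` A)) (lin_span (basis_vec ` B))"
    unfolding tensor_space_def by (rule lin_span_mono)
  then show ?thesis
    using in_lin_span_basis_vec_supp[OF assms(1)] by (rule subsetD)
qed

lemma valid_from_append:
  "valid_from s t v (as @ bs) \<longleftrightarrow> valid_from s t v as \<and> valid_from s t (path_end t v as) bs"
  by (induction as arbitrary: v) auto

lemma path_end_append: "path_end t v (as @ bs) = path_end t (path_end t v as) bs"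
  by (induction as arbitrary: v) auto

lemma concat_eq_left_factor_trans:
  assumes "concat_eq s t x' y' x" "concat_eq s t x y p"
  shows "concat_eq s t x' (fst y', snd y' @ snd y) p"
  using assms by (auto simp: concat_eq_def is_path_def valid_from_append path_end_append)

lemma concat_eq_trivial_right:
  "is_path s t p \<Longrightarrow> concat_eq s t p (path_end t (fst p) (snd p), []) p"
  by (auto simp: concat_eq_def is_path_def)

lemma finite_factorizations: "finite {(x, y). concat_eq s t x y p}"
proof (rule finite_subset)
  let ?split = "\<lambda>k. ((fst p, take k (snd p)), (path_end t (fst p) (take k (snd p)), drop k (snd p)))"
  show "{(x, y). concat_eq s t x y p} \<subseteq> ?split ` {..length (snd p)}"
  proof (clarify)
    fix x y assume "concat_eq s t x y p"
    then show "(x, y) \<in> ?split ` {..length (snd p)}"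
      by (intro image_eqI[of _ _ "length (snd x)"]) (auto simp: concat_eq_def prod_eq_iff)
  qed
qed simp

definition left_factors :: "('a \<Rightarrow> 'v) \<Rightarrow> ('a \<Rightarrow> 'v) \<Rightarrow> ('v,'a) path set \<Rightarrow> ('v,'a) path set" where
  "left_factors s t T = {x. \<exists>p\<in>T. \<exists>y. concat_eq s t x y p}"

lemma finite_left_factors:
  assumes "finite T"
  shows "finite (left_factors s t T)"
proof -
  have "finite (\<Union>p\<in>T. {(x, y). concat_eq s t x y p})"
    using assms finite_factorizations by blast
  moreover have "left_factors s t T \<subseteq> fst ` (\<Union>p\<in>T. {(x, y). concat_eq s t x y p})"
    unfolding left_factors_def by force
  ultimately show ?thesis
    using finite_subset by blast
qed

lemma left_factors_left_factor_closed:
  "x \<in> left_factors s t T \<Longrightarrow> concat_eq s t x' y' x \<Longrightarrow> x' \<in> left_factors s t T"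
  unfolding left_factors_def using concat_eq_left_factor_trans by blast

lemma subset_left_factors: "T \<subseteq> {p. is_path s t p} \<Longrightarrow> T \<subseteq> left_factors s t T"
  unfolding left_factors_def using concat_eq_trivial_right by blast

definition factor_closed :: "('a \<Rightarrow> 'v) \<Rightarrow> ('a \<Rightarrow> 'v) \<Rightarrow> ('v,'a) path set \<Rightarrow> bool" where
  "factor_closed s t P \<longleftrightarrow> (\<forall>p\<in>P. \<forall>x y. concat_eq s t x y p \<longrightarrow> x \<in> P \<and> y \<in> P)"

lemma left_factors_subset:
  "factor_closed s t P \<Longrightarrow> T \<subseteq> P \<Longrightarrow> left_factors s t T \<subseteq> P"
  unfolding factor_closed_def left_factors_def by blast

lemma comult_basis_vec: "comult s t (basis_vec p :: _ \<Rightarrow> 'k::field) = comult_path s t p"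
  by (simp add: comult_def) (simp add: basis_vec_def)

lemma supp_comult_subset:
  "supp (comult s t (f :: _ \<Rightarrow> 'k::field)) \<subseteq> (\<Union>p\<in>supp f. {(x, y). concat_eq s t x y p})"
proof
  fix xy assume "xy \<in> supp (comult s t f)"
  then have "(\<Sum>p\<in>supp f. f p * comult_path s t p xy) \<noteq> 0"
    by (simp add: supp_def comult_def)
  then obtain p where "p \<in> supp f" "f p * comult_path s t p xy \<noteq> 0"
    by (meson sum.neutral)
  then show "xy \<in> (\<Union>p\<in>supp f. {(x, y). concat_eq s t x y p})"
    by (auto simp: comult_path_def split: prod.splits if_splits)
qed

lemma subcoalgebra_lin_span_factor_closed:
  assumes "subcoalgebra s t (lin_span (basis_vec ` P) :: (_ \<Rightarrow> 'k::field) set)"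
  shows "factor_closed s t P"
  unfolding factor_closed_def
proof (intro ballI allI impI)
  let ?C = "lin_span (basis_vec ` P) :: (_ \<Rightarrow> 'k) set"
  fix p x y assume "p \<in> P" "concat_eq s t x y p"
  then have "(basis_vec p :: _ \<Rightarrow> 'k) \<in> ?C"
    by simp
  then have "comult s t (basis_vec p :: _ \<Rightarrow> 'k) \<in> tensor_space ?C ?C"
    using assms unfolding subcoalgebra_def by blast
  then have "supp (comult s t (basis_vec p :: _ \<Rightarrow> 'k)) \<subseteq> P \<times> P"
    by (rule supp_tensor_space_subset) (auto simp: lin_span_basis_vec_iff)
  moreover have "(x, y) \<in> supp (comult s t (basis_vec p :: _ \<Rightarrow> 'k))"
    using \<open>concat_eq s t x y p\<close> by (simp add: comult_basis_vec supp_def comult_path_def)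
  ultimately show "x \<in> P \<and> y \<in> P" by auto
qed

lemma right_coideal_lin_span_basis_vec:
  assumes "P \<subseteq> P\<^sub>0"
    and "\<And>x y p. p \<in> P \<Longrightarrow> concat_eq s t x y p \<Longrightarrow> x \<in> P \<and> y \<in> P\<^sub>0"
  shows "right_coideal s t (lin_span (basis_vec ` P\<^sub>0))
           (lin_span (basis_vec ` P) :: (_ \<Rightarrow> 'k::field) set)"
proof -
  have "comult s t f \<in> tensor_space (lin_span (basis_vec ` P)) (lin_span (basis_vec ` P\<^sub>0))"
    if f: "f \<in> lin_span (basis_vec ` P)" for f :: "_ \<Rightarrow> 'k"
  proof (rule in_tensor_space_lin_span_basis_vec)
    have f_supp: "finite (supp f)" "supp f \<subseteq> P"
      using f by (auto simp: lin_span_basis_vec_iff)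
    have comult_supp: "supp (comult s t f) \<subseteq> (\<Union>p\<in>supp f. {(x, y). concat_eq s t x y p})"
      by (rule supp_comult_subset)
    have "finite (\<Union>p\<in>supp f. {(x, y). concat_eq s t x y p})"
      using f_supp(1) by (intro finite_UN_I finite_factorizations)
    then show "finite (supp (comult s t f))"
      using comult_supp by (rule finite_subset[rotated])
    show "supp (comult s t f) \<subseteq> P \<times> P\<^sub>0"
      using comult_supp f_supp(2) assms(2) by blast
  qed
  moreover have "lin_span (basis_vec ` P) \<subseteq> (lin_span (basis_vec ` P\<^sub>0) :: (_ \<Rightarrow> 'k) set)"
    using assms(1) by (intro lin_span_mono image_mono)
  ultimately show ?thesis
    unfolding right_coideal_def using subspace_of_lin_span_basis_vec by blast
qed

lemma right_coideal_lin_span_left_factors: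
  assumes "factor_closed s t P\<^sub>0" "T \<subseteq> P\<^sub>0"
  shows "right_coideal s t (lin_span (basis_vec ` P\<^sub>0))
           (lin_span (basis_vec ` left_factors s t T) :: (_ \<Rightarrow> 'k::field) set)"
  using left_factors_subset[OF assms]
proof (rule right_coideal_lin_span_basis_vec)
  fix x y p assume "p \<in> left_factors s t T" "concat_eq s t x y p"
  then show "x \<in> left_factors s t T \<and> y \<in> P\<^sub>0"
    using left_factors_left_factor_closed left_factors_subset[OF assms] assms(1)
    unfolding factor_closed_def by blast
qed

lemma fg_right_coideal_subset_lin_span:
  assumes "fg_right_coideal s t C I" "C = lin_span (basis_vec ` P\<^sub>0)"
  obtains T where "finite T" "T \<subseteq> P\<^sub>0"
    "\<And>Q. right_coideal s t C (lin_span (basis_vec ` Q)) \<Longrightarrow> T \<subseteq> Q \<Longrightarrow>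
      I \<subseteq> lin_span (basis_vec ` Q)"
proof -
  obtain S where S: "finite S" "I = \<Inter>{J. right_coideal s t C J \<and> S \<subseteq> J}"
    using assms(1) unfolding fg_right_coideal_def by blast
  have "S \<subseteq> C"
    using S(2) assms(1) unfolding fg_right_coideal_def right_coideal_def by blast
  define T where "T = (\<Union>f\<in>S. supp f)"
  have supp_S: "finite (supp f) \<and> supp f \<subseteq> P\<^sub>0" if "f \<in> S" for f
    using subsetD[OF \<open>S \<subseteq> C\<close> that] by (simp add: assms(2) lin_span_basis_vec_iff)
  then have "finite T" "T \<subseteq> P\<^sub>0"
    using S(1) by (auto simp: T_def)
  moreover have "I \<subseteq> lin_span (basis_vec ` Q)"
    if Q: "right_coideal s t C (lin_span (basis_vec ` Q))" "T \<subseteq> Q" for Q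
  proof -
    have "S \<subseteq> lin_span (basis_vec ` Q)"
    proof
      fix f assume "f \<in> S"
      then have "supp f \<subseteq> T"
        unfolding T_def by (rule UN_upper)
      with Q(2) supp_S[OF \<open>f \<in> S\<close>] show "f \<in> lin_span (basis_vec ` Q)"
        unfolding lin_span_basis_vec_iff by (blast intro: order_trans)
    qed
    then show ?thesis
      using S(2) Q(1) by blast
  qed
  ultimately show ?thesis
    using that by blast
qed

theorem lemma4p9:
  fixes src tgt :: "'a \<Rightarrow> 'v"
    and C I :: "(('v,'a) path \<Rightarrow> 'k::field) set"
  assumes "monomial_subcoalgebra src tgt C"
    and "fg_right_coideal src tgt C I"
  shows "\<exists>J P. right_coideal src tgt C J \<and> I \<subseteq> J \<and> finite P \<and>
           P \<subseteq> {p. is_path src tgt p \<and> basis_vec p \<in> C} \<and>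
           J = lin_span (basis_vec ` P)"
proof -
  obtain P\<^sub>0 where P\<^sub>0_paths: "P\<^sub>0 \<subseteq> {p. is_path src tgt p}"
    and C_eq: "C = lin_span (basis_vec ` P\<^sub>0)" and "subcoalgebra src tgt C"
    using assms(1) unfolding monomial_subcoalgebra_def by blast
  then have closed: "factor_closed src tgt P\<^sub>0"
    using subcoalgebra_lin_span_factor_closed by blast
  obtain T where T: "finite T" "T \<subseteq> P\<^sub>0"
    and I_subset: "\<And>Q. right_coideal src tgt C (lin_span (basis_vec ` Q)) \<Longrightarrow> T \<subseteq> Q \<Longrightarrow>
      I \<subseteq> lin_span (basis_vec ` Q)"
    using fg_right_coideal_subset_lin_span[OF assms(2) C_eq] by blast
  define P where "P = left_factors src tgt T"
  have J: "right_coideal src tgt C (lin_span (basis_vec ` P))"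
    unfolding C_eq P_def using closed T(2) by (rule right_coideal_lin_span_left_factors)
  have "T \<subseteq> P"
    unfolding P_def by (rule subset_left_factors) (use T(2) P\<^sub>0_paths in blast)
  have "P \<subseteq> P\<^sub>0"
    unfolding P_def using closed T(2) by (rule left_factors_subset)
  then have "P \<subseteq> {p. is_path src tgt p \<and> basis_vec p \<in> C}"
    using P\<^sub>0_paths by (auto simp: C_eq)
  moreover have "finite P"
    unfolding P_def using T(1) by (rule finite_left_factors)
  ultimately show ?thesis
    using J I_subset[OF J \<open>T \<subseteq> P\<close>] by blast
qed

end
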